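(* Fix an MDP $M$ and a layer $h\in[H]$. Suppose we have a sequence of functions $g^{(1)},\dots,g^{(T)}:\mathcal{X}\times\mathcal{A}\to[0,B]$ and policies $\pi^{(1)},\dots,\pi^{(T)}\in\Pi$ such that for all $t\in[T]$, $\sum_{i<t}\mathbb{E}^{M,\pi^{(i)}}[(g^{(t)}(x_h,a_h))^2]\le\beta^2$. Then $$\sum_{t=1}^T\mathbb{E}^{M,\pi^{(t)}}[g^{(t)}(x_h,a_h)]\le 2(C^M_{1;h})^{1/3}(\beta^2B+B^3)^{1/3}T^{2/3}.$$
   Context: Episodic MDP $M$ over countable $\mathcal{X}$, actions $\mathcal{A}$, horizon $H$; $\Pi\subseteq\Pi_{\mathrm{RNS}}$ a policy class; $d^{M,\pi}_h(x,a)$ the layer-$h$ occupancy; $C^M_{1;h}=\inf_{\mu\in\Delta(\mathcal{X}\times\mathcal{A})}\sup_{\pi\in\Pi}\mathbb{E}^{M,\pi}\big[\frac{d^{M,\pi}_h(x_h,a_h)}{\mu(x_h,a_h)}\big]$. *)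

theory Defs
  imports "HOL-Probability.Probability"
begin

text \<open>Episodic MDP over a countable state space 'x and action space 'a.
  Layers are numbered 1..H.  trans h x a is the law of x_{h+1} given (x_h,a_h)=(x,a).\<close>
record ('x, 'a) mdp =
  init  :: "'x pmf"
  trans :: "nat \<Rightarrow> 'x \<Rightarrow> 'a \<Rightarrow> 'x pmf"

type_synonym ('x, 'a) policy = "nat \<Rightarrow> 'x \<Rightarrow> 'a pmf"

text \<open>state_dist M p n = law of x_{n+1} under M and p.\<close>
primrec state_dist :: "('x, 'a) mdp \<Rightarrow> ('x, 'a) policy \<Rightarrow> nat \<Rightarrow> 'x pmf" where
  "state_dist M p 0 = init M"
| "state_dist M p (Suc n) =
     bind_pmf (state_dist M p n)
       (\<lambda>x. bind_pmf (p (Suc n) x) (\<lambda>a. trans M (Suc n) x a))"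

text \<open>Layer-h occupancy d^{M,p}_h (h >= 1): law of (x_h, a_h).\<close>
definition occ :: "('x, 'a) mdp \<Rightarrow> ('x, 'a) policy \<Rightarrow> nat \<Rightarrow> ('x \<times> 'a) pmf" where
  "occ M p h = bind_pmf (state_dist M p (h - 1)) (\<lambda>x. map_pmf (\<lambda>a. (x, a)) (p h x))"

definition expect :: "('x, 'a) mdp \<Rightarrow> ('x, 'a) policy \<Rightarrow> nat \<Rightarrow> ('x \<times> 'a \<Rightarrow> real) \<Rightarrow> real" where
  "expect M p h f = measure_pmf.expectation (occ M p h) f"

text \<open>Coverability coefficient C^M_{1;h} (as an extended nonnegative real; a ratio with
  mu = 0 and d > 0 is +infinity).\<close>
definition cov1 :: "('x, 'a) mdp \<Rightarrow> ('x, 'a) policy set \<Rightarrow> nat \<Rightarrow> ennreal" where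
  "cov1 M PP h = (INF mu :: ('x \<times> 'a) pmf. SUP p \<in> PP.
      \<integral>\<^sup>+ z. ennreal (pmf (occ M p h) z) / ennreal (pmf mu z) \<partial>(measure_pmf (occ M p h)))"

end

theory Submission
  imports Defs
begin

text \<open>Write \<open>d\<^sub>t\<close> for the occupancy of round \<open>t\<close>, \<open>W\<^sub>t = d\<^sub>1 + \<dots> + d\<^sub>t\<close> for the cumulative
  occupancy, and fix a reference distribution \<open>\<mu>\<close> whose coverage ratio is at most \<open>C\<close> for every
  policy. At a pair \<open>z\<close>, round \<open>t\<close> is a burn-in round while \<open>W\<^sub>t(z) < \<lambda> \<mu>(z)\<close>; these rounds
  carry total occupancy below \<open>\<lambda> \<mu>(z)\<close>, hence contribute at most \<open>B \<lambda>\<close> overall. In the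
  remaining rounds AM-GM with weight \<open>s W\<^sub>t(z) \<ge> s \<lambda> \<mu>(z)\<close> gives
  \<open>d\<^sub>t g\<^sub>t \<le> d\<^sub>t\<^sup>2 / (2 s \<lambda> \<mu>) + (s/2) W\<^sub>t g\<^sub>t\<^sup>2\<close>: summed over \<open>z\<close>, the first term is the
  coverage ratio divided by \<open>2 s \<lambda>\<close>, and the second is \<open>s/2\<close> times the square loss of \<open>g\<^sub>t\<close>
  under the policies up to round \<open>t\<close>, at most \<open>\<beta>\<^sup>2 + B\<^sup>2\<close>. Balancing \<open>\<lambda>\<close> and \<open>s\<close> gives the
  cube-root bound for every \<open>C\<close> above the coverability coefficient, and the coefficient itself is
  reached in the limit, as the infimum over \<open>\<mu>\<close> need not be attained.\<close>

lemma ennreal_expectation_pmf: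
  fixes p :: "'z pmf"
  assumes "\<And>z. 0 \<le> f z" "\<And>z. f z \<le> K"
  shows "ennreal (measure_pmf.expectation p f) = (\<integral>\<^sup>+ z. ennreal (pmf p z * f z) \<partial>count_space UNIV)"
proof -
  have "integrable (measure_pmf p) f"
    by (rule measure_pmf.integrable_const_bound[of _ K]) (use assms in auto)
  then have "ennreal (measure_pmf.expectation p f) = (\<integral>\<^sup>+ z. ennreal (f z) \<partial>measure_pmf p)"
    using assms by (simp add: nn_integral_eq_integral)
  then show ?thesis
    by (simp add: nn_integral_measure_pmf ennreal_mult')
qed

lemma nn_integral_sum_pmf_mult:
  fixes p :: "'i \<Rightarrow> 'z pmf"
  assumes "finite I" "\<And>z. 0 \<le> f z" "\<And>z. f z \<le> K"
  shows "(\<integral>\<^sup>+ z. ennreal ((\<Sum>i\<in>I. pmf (p i) z) * f z) \<partial>count_space UNIV)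
       = ennreal (\<Sum>i\<in>I. measure_pmf.expectation (p i) f)"
proof -
  have "(\<integral>\<^sup>+ z. ennreal ((\<Sum>i\<in>I. pmf (p i) z) * f z) \<partial>count_space UNIV)
      = (\<integral>\<^sup>+ z. (\<Sum>i\<in>I. ennreal (pmf (p i) z * f z)) \<partial>count_space UNIV)"
    by (subst sum_ennreal) (use assms(2) in \<open>auto simp: sum_distrib_right\<close>)
  also have "\<dots> = (\<Sum>i\<in>I. \<integral>\<^sup>+ z. ennreal (pmf (p i) z * f z) \<partial>count_space UNIV)"
    by (rule nn_integral_sum) simp
  also have "\<dots> = (\<Sum>i\<in>I. ennreal (measure_pmf.expectation (p i) f))"
    by (intro sum.cong refl ennreal_expectation_pmf[of f K, symmetric]) (use assms in auto)
  also have "\<dots> = ennreal (\<Sum>i\<in>I. measure_pmf.expectation (p i) f)"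
    using assms(2) by (simp add: sum_ennreal integral_nonneg)
  finally show ?thesis .
qed

lemma nn_integral_cumulative_square_le:
  fixes p :: "nat \<Rightarrow> 'z pmf"
  assumes f: "\<And>z. 0 \<le> f z \<and> f z \<le> B"
    and past: "(\<Sum>i\<in>{1..<t}. measure_pmf.expectation (p i) (\<lambda>z. (f z)\<^sup>2)) \<le> b"
    and t: "1 \<le> t"
  shows "(\<integral>\<^sup>+ z. ennreal ((\<Sum>i\<in>{1..t}. pmf (p i) z) * (f z)\<^sup>2) \<partial>count_space UNIV) \<le> ennreal (b + B\<^sup>2)"
proof -
  have sq: "0 \<le> (f z)\<^sup>2" "(f z)\<^sup>2 \<le> B\<^sup>2" for z
    using f[of z] by (auto simp: power_mono)
  have "(\<Sum>i\<in>{1..t}. measure_pmf.expectation (p i) (\<lambda>z. (f z)\<^sup>2))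
      = (\<Sum>i\<in>{1..<t}. measure_pmf.expectation (p i) (\<lambda>z. (f z)\<^sup>2))
        + measure_pmf.expectation (p t) (\<lambda>z. (f z)\<^sup>2)"
    using t by (simp flip: atLeastLessThanSuc_atLeastAtMost)
  also have "\<dots> \<le> b + B\<^sup>2"
    using past sq
    by (intro add_mono measure_pmf.integral_le_const measure_pmf.integrable_const_bound[of _ "B\<^sup>2"]) auto
  finally show ?thesis
    using sq by (simp add: nn_integral_sum_pmf_mult[where K = "B\<^sup>2"] ennreal_leI)
qed

lemma nn_integral_cmult_coverage_le:
  fixes p mu :: "'z pmf"
  assumes "(\<integral>\<^sup>+ z. ennreal (pmf p z) / ennreal (pmf mu z) \<partial>measure_pmf p) \<le> ennreal C"
    and "0 < a"
  shows "(\<integral>\<^sup>+ z. ennreal (1 / a) * (ennreal (pmf p z) * (ennreal (pmf p z) / ennreal (pmf mu z)))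
      \<partial>count_space UNIV) \<le> ennreal (C / a)"
proof -
  have "(\<integral>\<^sup>+ z. ennreal (1 / a) * (ennreal (pmf p z) * (ennreal (pmf p z) / ennreal (pmf mu z)))
      \<partial>count_space UNIV)
      = ennreal (1 / a) * (\<integral>\<^sup>+ z. ennreal (pmf p z) / ennreal (pmf mu z) \<partial>measure_pmf p)"
    by (simp add: nn_integral_cmult nn_integral_measure_pmf)
  also have "\<dots> \<le> ennreal (1 / a) * ennreal C"
    using assms(1) by (rule mult_left_mono) simp
  also have "\<dots> = ennreal (C / a)"
    using assms(2) by (simp flip: ennreal_mult')
  finally show ?thesis .
qed

lemma sum_if_partial_sum_less_le_min:
  fixes a :: "nat \<Rightarrow> real"
  assumes "\<And>i. 0 \<le> a i" "0 \<le> c"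
  shows "(\<Sum>t\<in>{1..T}. if (\<Sum>i\<in>{1..t}. a i) < c then a t else 0) \<le> min (\<Sum>i\<in>{1..T}. a i) c"
proof (induction T)
  case 0
  then show ?case using assms by simp
next
  case (Suc T)
  then show ?case using assms(1)[of "Suc T"] by (auto simp: min_def split: if_splits)
qed

lemma mult_le_sq_div_plus_sq:
  fixes x y r :: real
  assumes "0 < r"
  shows "x * y \<le> x\<^sup>2 / (2 * r) + r / 2 * y\<^sup>2"
proof -
  have "0 \<le> (x - r * y)\<^sup>2 / (2 * r)" using assms by simp
  also have "\<dots> = x\<^sup>2 / (2 * r) + r / 2 * y\<^sup>2 - x * y"
    using assms by (simp add: field_simps power2_eq_square)
  finally show ?thesis by simp
qed

lemma ennreal_mult_le_burn_in_split:
  fixes d g w m B lam s :: real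
  assumes d: "0 \<le> d" and g: "0 \<le> g" "g \<le> B" and m: "0 \<le> m" and lam: "0 < lam" and s: "0 < s"
  shows "ennreal (d * g) \<le> ennreal (B * (if w < lam * m then d else 0))
           + ennreal (1 / (2 * s * lam)) * (ennreal d * (ennreal d / ennreal m))
           + ennreal (s / 2) * ennreal (w * g\<^sup>2)"
proof -
  consider (burn_in) "w < lam * m" | (null) "lam * m \<le> w" "m = 0" | (covered) "lam * m \<le> w" "0 < m"
    using m by linarith
  then show ?thesis
  proof cases
    case burn_in
    have "d * g \<le> B * d" using mult_right_mono[OF g(2) d] by (simp add: mult.commute)
    then show ?thesis using burn_in by (simp add: ennreal_leI add.assoc add_increasing2)
  next
    case null
    show ?thesis
    proof (cases "d = 0")
      case False
      then have "ennreal (1 / (2 * s * lam)) * (ennreal d * (ennreal d / ennreal m)) = \<top>"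
        using null d s lam by (simp add: ennreal_mult_top)
      then show ?thesis by simp
    qed simp
  next
    case covered
    have w: "0 < w" using covered lam by (smt (verit) mult_pos_pos)
    have "d * g \<le> d\<^sup>2 / (2 * (s * w)) + s * w / 2 * g\<^sup>2"
      using s w by (intro mult_le_sq_div_plus_sq) simp
    also have "\<dots> \<le> d\<^sup>2 / (2 * s * lam * m) + s / 2 * (w * g\<^sup>2)"
      using covered s lam w by (intro add_mono divide_left_mono) (auto simp: mult.assoc)
    finally have "ennreal (d * g) \<le> ennreal (d\<^sup>2 / (2 * s * lam * m) + s / 2 * (w * g\<^sup>2))"
      by (rule ennreal_leI)
    also have "\<dots> = ennreal (d\<^sup>2 / (2 * s * lam * m)) + ennreal (s / 2 * (w * g\<^sup>2))"
      using s lam w covered by (intro ennreal_plus) auto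
    also have "ennreal (s / 2 * (w * g\<^sup>2)) = ennreal (s / 2) * ennreal (w * g\<^sup>2)"
      using s by (intro ennreal_mult') simp
    also have "ennreal (d\<^sup>2 / (2 * s * lam * m)) = ennreal (1 / (2 * s * lam)) * (ennreal d * (ennreal d / ennreal m))"
      using d s lam covered
      by (simp add: divide_ennreal power2_eq_square flip: ennreal_mult')
    finally show ?thesis by (simp add: add.assoc add_increasing)
  qed
qed

lemma burn_in_sum_le:
  fixes p :: "nat \<Rightarrow> 'z pmf" and mu :: "'z pmf"
  assumes B: "0 \<le> B" and lam: "0 \<le> lam"
  shows "(\<Sum>t\<in>{1..T}. \<integral>\<^sup>+ z. ennreal (B * (if (\<Sum>i\<in>{1..t}. pmf (p i) z) < lam * pmf mu z
            then pmf (p t) z else 0)) \<partial>count_space UNIV) \<le> ennreal (B * lam)"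
proof -
  have pointwise: "(\<Sum>t\<in>{1..T}. ennreal (B * (if (\<Sum>i\<in>{1..t}. pmf (p i) z) < lam * pmf mu z
            then pmf (p t) z else 0))) \<le> ennreal (B * lam) * ennreal (pmf mu z)" for z
  proof -
    have "(\<Sum>t\<in>{1..T}. if (\<Sum>i\<in>{1..t}. pmf (p i) z) < lam * pmf mu z then pmf (p t) z else 0)
        \<le> lam * pmf mu z"
      using sum_if_partial_sum_less_le_min[of "\<lambda>i. pmf (p i) z" "lam * pmf mu z" T] lam by simp
    then have "B * (\<Sum>t\<in>{1..T}. if (\<Sum>i\<in>{1..t}. pmf (p i) z) < lam * pmf mu z then pmf (p t) z else 0)
        \<le> B * lam * pmf mu z"
      using B by (simp add: mult_left_mono mult.assoc)
    then show ?thesis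
      using B lam by (simp add: sum_distrib_left ennreal_leI flip: ennreal_mult)
  qed
  have "(\<Sum>t\<in>{1..T}. \<integral>\<^sup>+ z. ennreal (B * (if (\<Sum>i\<in>{1..t}. pmf (p i) z) < lam * pmf mu z
            then pmf (p t) z else 0)) \<partial>count_space UNIV)
      = (\<integral>\<^sup>+ z. (\<Sum>t\<in>{1..T}. ennreal (B * (if (\<Sum>i\<in>{1..t}. pmf (p i) z) < lam * pmf mu z
            then pmf (p t) z else 0))) \<partial>count_space UNIV)"
    by (rule nn_integral_sum[symmetric]) simp
  also have "\<dots> \<le> (\<integral>\<^sup>+ z. ennreal (B * lam) * ennreal (pmf mu z) \<partial>count_space UNIV)"
    by (intro nn_integral_mono pointwise)
  also have "\<dots> = ennreal (B * lam)"
    by (simp add: nn_integral_cmult nn_integral_pmf_eq_1)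
  finally show ?thesis .
qed

lemma sum_expectation_le_coverage_tradeoff:
  fixes p :: "nat \<Rightarrow> 'z pmf" and mu :: "'z pmf" and g :: "nat \<Rightarrow> 'z \<Rightarrow> real"
  assumes g: "\<And>t z. t \<in> {1..T} \<Longrightarrow> 0 \<le> g t z \<and> g t z \<le> B"
    and coverage: "\<And>t. t \<in> {1..T} \<Longrightarrow>
      (\<integral>\<^sup>+ z. ennreal (pmf (p t) z) / ennreal (pmf mu z) \<partial>measure_pmf (p t)) \<le> ennreal C"
    and square_loss: "\<And>t. t \<in> {1..T} \<Longrightarrow>
      (\<Sum>i\<in>{1..<t}. measure_pmf.expectation (p i) (\<lambda>z. (g t z)\<^sup>2)) \<le> b"
    and B: "0 \<le> B" and C: "0 \<le> C" and b: "0 \<le> b" and lam: "0 < lam" and s: "0 < s"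
  shows "(\<Sum>t\<in>{1..T}. measure_pmf.expectation (p t) (g t))
      \<le> B * lam + real T * (C / (2 * s * lam) + s / 2 * (b + B\<^sup>2))"
proof -
  let ?c = "count_space UNIV"
  define W where "W t z = (\<Sum>i\<in>{1..t}. pmf (p i) z)" for t z
  define burn_in where
    "burn_in t z = ennreal (B * (if W t z < lam * pmf mu z then pmf (p t) z else 0))" for t z
  define cover where "cover t z = ennreal (1 / (2 * s * lam))
      * (ennreal (pmf (p t) z) * (ennreal (pmf (p t) z) / ennreal (pmf mu z)))" for t z
  define var where "var t z = ennreal (s / 2) * ennreal (W t z * (g t z)\<^sup>2)" for t z
  have cover_le: "(\<integral>\<^sup>+ z. cover t z \<partial>?c) \<le> ennreal (C / (2 * s * lam))" if "t \<in> {1..T}" for t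
    unfolding cover_def using s lam coverage[OF that]
    by (simp add: nn_integral_cmult_coverage_le)
  have var_le: "(\<integral>\<^sup>+ z. var t z \<partial>?c) \<le> ennreal (s / 2 * (b + B\<^sup>2))" if t: "t \<in> {1..T}" for t
  proof -
    have "(\<integral>\<^sup>+ z. var t z \<partial>?c) = ennreal (s / 2) * (\<integral>\<^sup>+ z. ennreal (W t z * (g t z)\<^sup>2) \<partial>?c)"
      by (simp add: var_def nn_integral_cmult)
    also have "\<dots> \<le> ennreal (s / 2) * ennreal (b + B\<^sup>2)"
      unfolding W_def using g[OF t] square_loss[OF t] t
      by (intro mult_left_mono nn_integral_cumulative_square_le) auto
    also have "\<dots> = ennreal (s / 2 * (b + B\<^sup>2))"
      using s by (simp flip: ennreal_mult')
    finally show ?thesis .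
  qed
  have pointwise: "ennreal (pmf (p t) z * g t z) \<le> burn_in t z + cover t z + var t z"
    if "t \<in> {1..T}" for t z
    unfolding burn_in_def cover_def var_def using g[OF that, of z] s lam
    by (intro ennreal_mult_le_burn_in_split) auto
  have "ennreal (\<Sum>t\<in>{1..T}. measure_pmf.expectation (p t) (g t))
      = (\<Sum>t\<in>{1..T}. ennreal (measure_pmf.expectation (p t) (g t)))"
    using g by (intro sum_ennreal[symmetric]) (simp add: integral_nonneg)
  also have "\<dots> = (\<Sum>t\<in>{1..T}. \<integral>\<^sup>+ z. ennreal (pmf (p t) z * g t z) \<partial>?c)"
    using g by (intro sum.cong refl ennreal_expectation_pmf[where K = B]) auto
  also have "\<dots> \<le> (\<Sum>t\<in>{1..T}. \<integral>\<^sup>+ z. burn_in t z + cover t z + var t z \<partial>?c)"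
    by (intro sum_mono nn_integral_mono pointwise)
  also have "\<dots> = (\<Sum>t\<in>{1..T}. \<integral>\<^sup>+ z. burn_in t z \<partial>?c) + (\<Sum>t\<in>{1..T}. \<integral>\<^sup>+ z. cover t z \<partial>?c)
      + (\<Sum>t\<in>{1..T}. \<integral>\<^sup>+ z. var t z \<partial>?c)"
    by (simp add: nn_integral_add sum.distrib)
  also have "\<dots> \<le> ennreal (B * lam) + (\<Sum>t\<in>{1..T}. ennreal (C / (2 * s * lam)))
      + (\<Sum>t\<in>{1..T}. ennreal (s / 2 * (b + B\<^sup>2)))"
    unfolding burn_in_def W_def using B lam
    by (intro add_mono burn_in_sum_le sum_mono cover_le var_le) auto
  also have "\<dots> = ennreal (B * lam + real T * (C / (2 * s * lam) + s / 2 * (b + B\<^sup>2)))"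
  proof -
    have collect: "ennreal (B * lam) + (\<Sum>t\<in>{1..T}. ennreal X) + (\<Sum>t\<in>{1..T}. ennreal Y)
        = ennreal (B * lam + real T * (X + Y))" if "0 \<le> X" "0 \<le> Y" for X Y
      using that B lam by (simp add: ennreal_plus ennreal_mult' distrib_left ennreal_of_nat_eq_real_of_nat)
    show ?thesis
      by (rule collect) (use s lam C b in auto)
  qed
  finally have "ennreal (\<Sum>t\<in>{1..T}. measure_pmf.expectation (p t) (g t))
      \<le> ennreal (B * lam + real T * (C / (2 * s * lam) + s / 2 * (b + B\<^sup>2)))" .
  moreover have "0 \<le> B * lam + real T * (C / (2 * s * lam) + s / 2 * (b + B\<^sup>2))"
    using B lam s C b by (intro add_nonneg_nonneg mult_nonneg_nonneg divide_nonneg_nonneg) auto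
  ultimately show ?thesis
    by (metis ennreal_le_iff)
qed

lemma coverage_tradeoff_optimum:
  fixes B C b T :: real
  assumes B: "0 < B" and C: "0 < C" and b: "0 \<le> b" and T: "0 < T"
  obtains lam s where "0 < lam" "0 < s"
    "B * lam + T * (C / (2 * s * lam) + s / 2 * (b + B\<^sup>2))
       = 2 * C powr (1/3) * (b * B + B ^ 3) powr (1/3) * T powr (2/3)"
proof -
  define q where "q = b + B\<^sup>2"
  define k where "k = (C * q) powr (1/3)"
  define r where "r = B powr (1/3)"
  define u where "u = T powr (1/3)"
  have q: "0 < q" unfolding q_def using B b by (simp add: add_nonneg_pos)
  have pos: "0 < k" "0 < r" "0 < u"
    unfolding k_def r_def u_def using B C T q by auto
  have cubes: "k ^ 3 = C * q" "r ^ 3 = B" "u ^ 3 = T"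
    unfolding k_def r_def u_def using B C T q by (simp_all add: powr_power)
  define lam where "lam = u\<^sup>2 * k / r\<^sup>2"
  define s where "s = k * r / (u * q)"
  have lam_pos: "0 < lam" and s_pos: "0 < s"
    unfolding lam_def s_def using pos q by auto
  have "r ^ 3 * lam + u ^ 3 * ((k ^ 3 / q) / (2 * s * lam) + s / 2 * q) = 2 * u\<^sup>2 * k * r"
    unfolding lam_def s_def using pos q by (simp add: field_simps power2_eq_square power3_eq_cube)
  then have "B * lam + T * (C / (2 * s * lam) + s / 2 * (b + B\<^sup>2)) = 2 * u\<^sup>2 * k * r"
    using cubes q by (simp add: q_def[symmetric])
  also have "\<dots> = 2 * C powr (1/3) * (b * B + B ^ 3) powr (1/3) * T powr (2/3)"
  proof -
    have "b * B + B ^ 3 = q * B" unfolding q_def by (simp add: algebra_simps power2_eq_square power3_eq_cube)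
    then have "C powr (1/3) * (b * B + B ^ 3) powr (1/3) = k * r"
      unfolding k_def r_def using B C q by (simp add: powr_mult mult.assoc)
    moreover have "T powr (2/3) = u\<^sup>2"
      unfolding u_def using T by (simp add: powr_power)
    ultimately show ?thesis by (simp add: mult.assoc mult.commute mult.left_commute)
  qed
  finally show thesis
    by (rule that[OF lam_pos s_pos])
qed

lemma sum_expectation_le_coverage_cube_root:
  fixes p :: "nat \<Rightarrow> 'z pmf" and mu :: "'z pmf" and g :: "nat \<Rightarrow> 'z \<Rightarrow> real"
  assumes g: "\<And>t z. t \<in> {1..T} \<Longrightarrow> 0 \<le> g t z \<and> g t z \<le> B"
    and coverage: "\<And>t. t \<in> {1..T} \<Longrightarrow>
      (\<integral>\<^sup>+ z. ennreal (pmf (p t) z) / ennreal (pmf mu z) \<partial>measure_pmf (p t)) \<le> ennreal C"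
    and square_loss: "\<And>t. t \<in> {1..T} \<Longrightarrow>
      (\<Sum>i\<in>{1..<t}. measure_pmf.expectation (p i) (\<lambda>z. (g t z)\<^sup>2)) \<le> b"
    and C: "0 < C" and b: "0 \<le> b"
  shows "(\<Sum>t\<in>{1..T}. measure_pmf.expectation (p t) (g t))
      \<le> 2 * C powr (1/3) * (b * B + B ^ 3) powr (1/3) * real T powr (2/3)"
proof -
  have B: "0 \<le> B" if "0 < T" using g[of 1] that by force
  consider "T = 0" | "0 < T" "B = 0" | "0 < T" "0 < B"
    using B by fastforce
  then show ?thesis
  proof cases
    case 2
    then have "g t = (\<lambda>_. 0)" if "t \<in> {1..T}" for t
      using g[OF that] 2 by (intro ext) (simp add: order_antisym)
    then show ?thesis using 2 by simp
  next
    case 3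
    obtain lam s where params: "0 < lam" "0 < s"
      "B * lam + real T * (C / (2 * s * lam) + s / 2 * (b + B\<^sup>2))
         = 2 * C powr (1/3) * (b * B + B ^ 3) powr (1/3) * real T powr (2/3)"
      using coverage_tradeoff_optimum[of B C b "real T"] 3 C b by auto
    have "(\<Sum>t\<in>{1..T}. measure_pmf.expectation (p t) (g t))
        \<le> B * lam + real T * (C / (2 * s * lam) + s / 2 * (b + B\<^sup>2))"
      by (rule sum_expectation_le_coverage_tradeoff[OF g coverage square_loss])
        (use 3 C b params in auto)
    then show ?thesis
      by (simp only: params(3))
  qed simp
qed

lemma le_of_tendsto_at_right:
  fixes f :: "real \<Rightarrow> real"
  assumes "(f \<longlongrightarrow> f x) (at_right x)" "\<And>y. x < y \<Longrightarrow> a \<le> f y"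
  shows "a \<le> f x"
  using assms eventually_at_right_less[of x]
  by (intro tendsto_lowerbound[OF assms(1)] trivial_limit_at_right_real) (auto elim: eventually_mono)

theorem lemmaI8:
  fixes M :: "('x :: countable, 'a) mdp"
    and PP :: "('x, 'a) policy set"
    and H h T :: nat
    and g :: "nat \<Rightarrow> 'x \<times> 'a \<Rightarrow> real"
    and pol :: "nat \<Rightarrow> ('x, 'a) policy"
    and B \<beta> :: real
  assumes "h \<in> {1..H}"
    and "\<And>t z. t \<in> {1..T} \<Longrightarrow> 0 \<le> g t z \<and> g t z \<le> B"
    and "\<And>t. t \<in> {1..T} \<Longrightarrow> pol t \<in> PP"
    and "\<And>t. t \<in> {1..T} \<Longrightarrow>
           (\<Sum>i\<in>{1..<t}. expect M (pol i) h (\<lambda>z. (g t z)\<^sup>2)) \<le> \<beta>\<^sup>2"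
  shows "cov1 M PP h \<noteq> \<top> \<longrightarrow>
    (\<Sum>t\<in>{1..T}. expect M (pol t) h (g t))
      \<le> 2 * enn2real (cov1 M PP h) powr (1/3) * (\<beta>\<^sup>2 * B + B ^ 3) powr (1/3)
          * real T powr (2/3)"
proof
  assume cov1_finite: "cov1 M PP h \<noteq> \<top>"
  define C where "C = enn2real (cov1 M PP h)"
  define F where "F c = 2 * c powr (1/3) * (\<beta>\<^sup>2 * B + B ^ 3) powr (1/3) * real T powr (2/3)" for c
  have C: "0 \<le> C" unfolding C_def by simp
  have cov1_eq: "cov1 M PP h = ennreal C"
    unfolding C_def using cov1_finite by (simp add: ennreal_enn2real_if)
  have above: "(\<Sum>t\<in>{1..T}. expect M (pol t) h (g t)) \<le> F c" if "C < c" for c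
  proof -
    have "cov1 M PP h < ennreal c"
      using cov1_eq that C by (simp add: ennreal_less_iff)
    then obtain mu where mu: "(SUP q\<in>PP. \<integral>\<^sup>+ z. ennreal (pmf (occ M q h) z) / ennreal (pmf mu z)
        \<partial>measure_pmf (occ M q h)) < ennreal c"
      unfolding cov1_def by (auto simp: INF_less_iff)
    have "(\<integral>\<^sup>+ z. ennreal (pmf (occ M (pol t) h) z) / ennreal (pmf mu z) \<partial>measure_pmf (occ M (pol t) h))
        \<le> ennreal c" if "t \<in> {1..T}" for t
      using SUP_upper[OF assms(3)[OF that]] mu by (meson order.trans less_imp_le)
    then show ?thesis
      unfolding F_def expect_def
      by (intro sum_expectation_le_coverage_cube_root[where mu = mu])
        (use assms(2,4) that C in \<open>auto simp: expect_def\<close>)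
  qed
  have F_cont: "(F \<longlongrightarrow> F C) (at_right C)"
    unfolding F_def using C eventually_at_right_less[of C]
    by (intro tendsto_intros) (auto elim: eventually_mono)
  from le_of_tendsto_at_right[OF F_cont above] show "(\<Sum>t\<in>{1..T}. expect M (pol t) h (g t))
      \<le> 2 * enn2real (cov1 M PP h) powr (1/3) * (\<beta>\<^sup>2 * B + B ^ 3) powr (1/3) * real T powr (2/3)"
    unfolding F_def C_def .
qed

end
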